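(* Let $n\ge 4$ and let $\mathcal{D}_n$ be a minimal complete DFA with state set $Q=\{0,\dots,n-1\}$, initial state $0$ and empty state $n-1$, accepting a suffix-free language, and let $T(n)$ be its transition semigroup. If no pair of states is colliding in $T(n)$, then $|T(n)|\le (n-1)^{n-2}+n-2$ and $T(n)$ is a subsemigroup of $\mathbf{W}_{\mathrm{sf}}(n)$.
   Context: A language $L$ is suffix-free if whenever $w\in L$ and $u\in L$ with $u$ a suffix of $w$, then $u=w$. Transformations act on the right ($qt$ is the image of $q$ under $t$). The transition semigroup of a DFA is the semigroup of transformations of its state set generated by the transformations induced by its letters. A minimal complete DFA of a suffix-free language with $n\ge 2$ states has exactly one empty state (a state from which no final state is reachable), labeled $n-1$. An unordered pair $\{p,q\}$ of distinct states of $Q\setminus\{0,n-1\}$ is colliding in $T(n)$ if there exist $t\in T(n)$ and $r\in Q\setminus\{0,n-1\}$ with $0t=p$ and $rt=q$. Define $\mathbf{B}_{\mathrm{sf}}(n)=\{t:Q\to Q \mid 0\notin Qt,\ (n-1)t=n-1,\ \text{and for all } j\ge1:\ 0t^j=n-1 \text{ or } 0t^j\neq qt^j \text{ for all } 0<q<n-1\}$ and $\mathbf{W}_{\mathrm{sf}}(n)=\{t\in\mathbf{B}_{\mathrm{sf}}(n)\mid 0t=n-1 \text{ or } qt=n-1 \text{ for all } 1\le q\le n-2\}$. *)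

theory Defs
  imports Main "HOL-Library.Sublist"
begin

definition dfa :: "nat \<Rightarrow> 'a set \<Rightarrow> (nat \<Rightarrow> 'a \<Rightarrow> nat) \<Rightarrow> nat set \<Rightarrow> bool" where
  "dfa n Al delta F \<longleftrightarrow> finite Al \<and> F \<subseteq> {0..<n}
     \<and> (\<forall>q<n. \<forall>a\<in>Al. delta q a < n)"

definition run :: "(nat \<Rightarrow> 'a \<Rightarrow> nat) \<Rightarrow> nat \<Rightarrow> 'a list \<Rightarrow> nat" where
  "run delta q w = foldl delta q w"

definition lang :: "'a set \<Rightarrow> (nat \<Rightarrow> 'a \<Rightarrow> nat) \<Rightarrow> nat set \<Rightarrow> 'a list set" where
  "lang Al delta F = {w \<in> lists Al. run delta 0 w \<in> F}"

definition suffix_free :: "'a list set \<Rightarrow> bool" where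
  "suffix_free L \<longleftrightarrow> (\<forall>w\<in>L. \<forall>u\<in>L. suffix u w \<longrightarrow> u = w)"

definition minimal_dfa :: "nat \<Rightarrow> 'a set \<Rightarrow> (nat \<Rightarrow> 'a \<Rightarrow> nat) \<Rightarrow> nat set \<Rightarrow> bool" where
  "minimal_dfa n Al delta F \<longleftrightarrow> dfa n Al delta F
     \<and> (\<forall>q<n. \<exists>w\<in>lists Al. run delta 0 w = q)
     \<and> (\<forall>p<n. \<forall>q<n. p \<noteq> q \<longrightarrow>
          (\<exists>w\<in>lists Al. (run delta p w \<in> F) \<noteq> (run delta q w \<in> F)))"

definition empty_state :: "'a set \<Rightarrow> (nat \<Rightarrow> 'a \<Rightarrow> nat) \<Rightarrow> nat set \<Rightarrow> nat \<Rightarrow> bool" where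
  "empty_state Al delta F q \<longleftrightarrow> (\<forall>w\<in>lists Al. run delta q w \<notin> F)"

text \<open>Transformations of Q = {0..<n} are represented as functions nat => nat that are
  the identity outside Q. The transformation induced by a word w (acting on the right,
  so q(uv) = (qu)v).\<close>
definition word_trans :: "nat \<Rightarrow> (nat \<Rightarrow> 'a \<Rightarrow> nat) \<Rightarrow> 'a list \<Rightarrow> nat \<Rightarrow> nat" where
  "word_trans n delta w = (\<lambda>q. if q < n then run delta q w else q)"

text \<open>Transition semigroup: generated by the letter transformations, i.e. the
  transformations induced by nonempty words.\<close>
definition trans_semigroup :: "nat \<Rightarrow> 'a set \<Rightarrow> (nat \<Rightarrow> 'a \<Rightarrow> nat) \<Rightarrow> (nat \<Rightarrow> nat) set" where
  "trans_semigroup n Al delta = {word_trans n delta w | w. w \<in> lists Al \<and> w \<noteq> []}"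

definition colliding :: "nat \<Rightarrow> (nat \<Rightarrow> nat) set \<Rightarrow> nat \<Rightarrow> nat \<Rightarrow> bool" where
  "colliding n T p q \<longleftrightarrow> p \<noteq> q \<and> 0 < p \<and> p < n - 1 \<and> 0 < q \<and> q < n - 1 \<and>
     (\<exists>t\<in>T. \<exists>r. 0 < r \<and> r < n - 1 \<and>
        ((t 0 = p \<and> t r = q) \<or> (t 0 = q \<and> t r = p)))"

definition transformations :: "nat \<Rightarrow> (nat \<Rightarrow> nat) set" where
  "transformations n = {t. (\<forall>q<n. t q < n) \<and> (\<forall>q\<ge>n. t q = q)}"

definition B_sf :: "nat \<Rightarrow> (nat \<Rightarrow> nat) set" where
  "B_sf n = {t \<in> transformations n.
      (\<forall>q<n. t q \<noteq> 0) \<and> t (n - 1) = n - 1 \<and>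
      (\<forall>j\<ge>1. (t ^^ j) 0 = n - 1 \<or> (\<forall>q. 0 < q \<and> q < n - 1 \<longrightarrow> (t ^^ j) 0 \<noteq> (t ^^ j) q))}"

definition W_sf :: "nat \<Rightarrow> (nat \<Rightarrow> nat) set" where
  "W_sf n = {t \<in> B_sf n. t 0 = n - 1 \<or> (\<forall>q. 1 \<le> q \<and> q \<le> n - 2 \<longrightarrow> t q = n - 1)}"

text \<open>Subsemigroup: subset closed under composition (right action: first t then s).\<close>
definition subsemigroup :: "(nat \<Rightarrow> nat) set \<Rightarrow> (nat \<Rightarrow> nat) set \<Rightarrow> bool" where
  "subsemigroup S M \<longleftrightarrow> S \<subseteq> M \<and> (\<forall>s\<in>S. \<forall>t\<in>S. t \<circ> s \<in> S)"

end

theory Submission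
  imports Defs "HOL-Library.FuncSet"
begin

text \<open>Suffix-freeness forces every nonempty word to act on the DFA in a very restricted way:
  if a word u leads from 0 to a state q and w maps q and 0 to the same non-empty state,
  then u w x and w x are both accepted for a suitable x, so u is empty.  Hence no
  transformation maps a state to 0, and 0 never merges with another non-empty state, which
  places every transformation in \<open>B_sf n\<close>.  If moreover no pair collides, a
  transformation t with 0t \<noteq> n-1 must send all of 1, \<dots>, n-2 to the empty state,
  since otherwise 0t and qt would form a colliding pair; this gives \<open>W_sf n\<close>.
  The bound is then a count of \<open>W_sf n\<close>: the transformations with 0t = n-1 are
  determined by the images of 1, \<dots>, n-2 in {1, \<dots>, n-1}, and each of the others is
  determined by 0t \<in> {1, \<dots>, n-2}.\<close>

lemma run_Nil [simp]: "run delta q [] = q"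
  by (simp add: run_def)

lemma run_append: "run delta q (u @ v) = run delta (run delta q u) v"
  by (simp add: run_def)

lemma run_less:
  assumes "dfa n Al delta F" "q < n" "w \<in> lists Al"
  shows "run delta q w < n"
  using assms(3)
proof (induction w rule: rev_induct)
  case (snoc a w)
  then show ?case using assms(1) by (simp add: run_def dfa_def)
qed (use assms(2) in simp)

lemma word_trans_append:
  assumes "dfa n Al delta F" "u \<in> lists Al"
  shows "word_trans n delta v \<circ> word_trans n delta u = word_trans n delta (u @ v)"
  using run_less[OF assms(1) _ assms(2)] by (auto simp: word_trans_def run_append)

lemma word_trans_funpow:
  assumes "dfa n Al delta F" "w \<in> lists Al"
  shows "word_trans n delta w ^^ j = word_trans n delta (concat (replicate j w))"
proof (induction j)
  case 0
  then show ?case by (auto simp: word_trans_def)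
next
  case (Suc j)
  have "word_trans n delta w ^^ Suc j = (word_trans n delta w ^^ j) \<circ> word_trans n delta w"
    by (rule funpow_Suc_right)
  also have "\<dots> = word_trans n delta (w @ concat (replicate j w))"
    using Suc word_trans_append[OF assms] by simp
  finally show ?case by simp
qed

lemma trans_semigroup_comp_closed:
  assumes "dfa n Al delta F" "s \<in> trans_semigroup n Al delta" "t \<in> trans_semigroup n Al delta"
  shows "t \<circ> s \<in> trans_semigroup n Al delta"
proof -
  obtain u where u: "s = word_trans n delta u" "u \<in> lists Al" "u \<noteq> []"
    using assms(2) unfolding trans_semigroup_def by blast
  obtain v where v: "t = word_trans n delta v" "v \<in> lists Al"
    using assms(3) unfolding trans_semigroup_def by blast
  have "t \<circ> s = word_trans n delta (u @ v)"
    using u v word_trans_append[OF assms(1) u(2)] by simp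
  moreover have "u @ v \<in> lists Al" "u @ v \<noteq> []" using u v by simp_all
  ultimately show ?thesis unfolding trans_semigroup_def by blast
qed

locale suffix_free_dfa =
  fixes n :: nat and Al :: "'a set" and delta :: "nat \<Rightarrow> 'a \<Rightarrow> nat" and F :: "nat set"
  assumes two_le_n: "2 \<le> n"
    and minimal: "minimal_dfa n Al delta F"
    and empty: "empty_state Al delta F (n - 1)"
    and suffix_free: "suffix_free (lang Al delta F)"
begin

lemma dfa: "dfa n Al delta F"
  using minimal by (simp add: minimal_dfa_def)

lemma reachable: "q < n \<Longrightarrow> \<exists>u\<in>lists Al. run delta 0 u = q"
  using minimal by (simp add: minimal_dfa_def)

lemma accepting_extension:
  assumes "p < n" "p \<noteq> n - 1"
  obtains x where "x \<in> lists Al" "run delta p x \<in> F"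
proof -
  have "n - 1 < n" using two_le_n by simp
  then obtain x where "x \<in> lists Al" "(run delta p x \<in> F) \<noteq> (run delta (n - 1) x \<in> F)"
    using minimal assms unfolding minimal_dfa_def by blast
  with empty that show ?thesis unfolding empty_state_def by blast
qed

lemma run_empty_state:
  assumes "w \<in> lists Al"
  shows "run delta (n - 1) w = n - 1"
proof (rule ccontr)
  assume "run delta (n - 1) w \<noteq> n - 1"
  moreover have "run delta (n - 1) w < n"
    using run_less[OF dfa _ assms] two_le_n by simp
  ultimately obtain x where "x \<in> lists Al" "run delta (n - 1) (w @ x) \<in> F"
    using accepting_extension by (metis run_append)
  with assms empty show False unfolding empty_state_def by simp
qed

lemma suffix_free_prefix_Nil:
  assumes "u \<in> lists Al" "w \<in> lists Al"
    and "run delta (run delta 0 u) w = run delta 0 w" "run delta 0 w \<noteq> n - 1"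
  shows "u = []"
proof -
  have "run delta 0 w < n" using run_less[OF dfa _ assms(2)] two_le_n by simp
  then obtain x where x: "x \<in> lists Al" "run delta (run delta 0 w) x \<in> F"
    using accepting_extension assms(4) by blast
  have "w @ x \<in> lang Al delta F" "u @ w @ x \<in> lang Al delta F"
    using x assms by (simp_all add: lang_def run_append)
  then have "w @ x = u @ w @ x"
    using suffix_free unfolding suffix_free_def by (meson suffix_appendI suffix_order.refl)
  then show ?thesis by simp
qed

lemma run_neq_initial:
  assumes "q < n" "w \<in> lists Al" "w \<noteq> []"
  shows "run delta q w \<noteq> 0"
proof
  assume run0: "run delta q w = 0"
  obtain u where u: "u \<in> lists Al" "run delta 0 u = q"
    using reachable assms(1) by blast
  have "u @ w = []"
    using suffix_free_prefix_Nil[of "u @ w" "[]"] u assms(2) run0 two_le_n by (simp add: run_append)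
  with assms(3) show False by simp
qed

lemma run_initial_separated:
  assumes "0 < q" "q < n - 1" "w \<in> lists Al" "run delta 0 w \<noteq> n - 1"
  shows "run delta 0 w \<noteq> run delta q w"
proof
  assume eq: "run delta 0 w = run delta q w"
  have "q < n" using assms(2) by simp
  then obtain u where u: "u \<in> lists Al" "run delta 0 u = q"
    using reachable by blast
  have "run delta (run delta 0 u) w = run delta 0 w" using u(2) eq by simp
  then have "u = []" using suffix_free_prefix_Nil[OF u(1) assms(3) _ assms(4)] by blast
  with u assms(1) show False by simp
qed

lemma word_trans_in_B_sf:
  assumes "w \<in> lists Al" "w \<noteq> []"
  shows "word_trans n delta w \<in> B_sf n"
proof -
  let ?t = "word_trans n delta w"
  have "?t \<in> transformations n"
    using run_less[OF dfa _ assms(1)] by (simp add: transformations_def word_trans_def)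
  moreover have "\<forall>q<n. ?t q \<noteq> 0" "?t (n - 1) = n - 1"
    using run_neq_initial[OF _ assms] run_empty_state[OF assms(1)] two_le_n
    by (simp_all add: word_trans_def)
  moreover have "(?t ^^ j) 0 = n - 1 \<or> (\<forall>q. 0 < q \<and> q < n - 1 \<longrightarrow> (?t ^^ j) 0 \<noteq> (?t ^^ j) q)"
    for j
  proof -
    have "concat (replicate j w) \<in> lists Al" using assms(1) by (induction j) auto
    then show ?thesis
      unfolding word_trans_funpow[OF dfa assms(1)]
      using run_initial_separated two_le_n by (auto simp: word_trans_def)
  qed
  ultimately show ?thesis by (simp add: B_sf_def)
qed

lemma word_trans_in_W_sf:
  assumes no_collision: "\<forall>p q. \<not> colliding n (trans_semigroup n Al delta) p q"
    and w: "w \<in> lists Al" "w \<noteq> []"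
  shows "word_trans n delta w \<in> W_sf n"
proof -
  let ?t = "word_trans n delta w"
  have B: "?t \<in> B_sf n" by (rule word_trans_in_B_sf[OF w])
  then have range: "\<forall>q<n. 0 < ?t q \<and> ?t q < n"
    by (auto simp: B_sf_def transformations_def)
  have T: "?t \<in> trans_semigroup n Al delta"
    using w unfolding trans_semigroup_def by blast
  have "?t q = n - 1" if init: "?t 0 \<noteq> n - 1" and "1 \<le> q" "q \<le> n - 2" for q
  proof (rule ccontr)
    assume empty_q: "?t q \<noteq> n - 1"
    have q: "0 < q" "q < n - 1" and qn: "q < n" using that two_le_n by auto
    then have t0: "?t 0 = run delta 0 w" and tq: "?t q = run delta q w"
      by (simp_all add: word_trans_def)
    have "run delta 0 w \<noteq> run delta q w"
      using run_initial_separated[OF q w(1)] init unfolding t0 by blast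
    then have "?t 0 \<noteq> ?t q" unfolding t0 tq .
    moreover have "0 < ?t 0" "?t 0 < n - 1" "0 < ?t q" "?t q < n - 1"
      using range[rule_format, of 0] range[rule_format, of q] init empty_q q qn two_le_n by auto
    ultimately have "colliding n (trans_semigroup n Al delta) (?t 0) (?t q)"
      using T q unfolding colliding_def by blast
    with no_collision show False by blast
  qed
  with B show ?thesis by (auto simp: W_sf_def)
qed

end

definition init_to_empty_trans :: "nat \<Rightarrow> (nat \<Rightarrow> nat) set" where
  "init_to_empty_trans n =
    {t \<in> transformations n. t 0 = n - 1 \<and> t (n - 1) = n - 1 \<and> (\<forall>q<n. t q \<noteq> 0)}"

definition others_to_empty_trans :: "nat \<Rightarrow> nat \<Rightarrow> nat \<Rightarrow> nat" where
  "others_to_empty_trans n p = (\<lambda>q. if q = 0 then p else if q < n then n - 1 else q)"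

lemma card_init_to_empty_trans_le:
  "finite (init_to_empty_trans n)" "card (init_to_empty_trans n) \<le> (n - 1) ^ (n - 2)"
proof -
  let ?S = "init_to_empty_trans n"
  let ?r = "\<lambda>t. restrict t {1..n-2}"
  have inj: "inj_on ?r ?S"
  proof (rule inj_onI, rule ext)
    fix s t q assume s: "s \<in> ?S" and t: "t \<in> ?S" and eq: "?r s = ?r t"
    show "s q = t q"
    proof (cases "q \<in> {1..n-2}")
      case True
      then show ?thesis using eq by (metis restrict_apply')
    next
      case False
      then have "q = 0 \<or> q = n - 1 \<or> q \<ge> n" by auto
      then show ?thesis using s t by (auto simp: init_to_empty_trans_def transformations_def)
    qed
  qed
  have sub: "?r ` ?S \<subseteq> (\<Pi>\<^sub>E i\<in>{1..n-2}. {1..n-1})"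
  proof (rule image_subsetI, rule restrict_PiE_iff[THEN iffD2], rule ballI)
    fix t i assume "t \<in> ?S" "i \<in> {1..n-2}"
    then have "t i < n" "t i \<noteq> 0"
      by (auto simp: init_to_empty_trans_def transformations_def)
    then show "t i \<in> {1..n-1}" by simp
  qed
  show "finite ?S" by (rule inj_on_finite[OF inj sub]) (simp add: finite_PiE)
  have "card ?S \<le> card (\<Pi>\<^sub>E i\<in>{1..n-2}. {1..n-1})"
    by (rule card_inj_on_le[OF inj sub]) (simp add: finite_PiE)
  then show "card ?S \<le> (n - 1) ^ (n - 2)" by (simp add: card_PiE)
qed

lemma W_sf_subset:
  "W_sf n \<subseteq> init_to_empty_trans n \<union> others_to_empty_trans n ` {1..n-2}"
proof
  fix t assume W: "t \<in> W_sf n"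
  show "t \<in> init_to_empty_trans n \<union> others_to_empty_trans n ` {1..n-2}"
  proof (cases "t 0 = n - 1")
    case True
    then show ?thesis using W by (auto simp: W_sf_def B_sf_def init_to_empty_trans_def)
  next
    case False
    then have tr: "t \<in> transformations n" "\<forall>q<n. t q \<noteq> 0" "t (n - 1) = n - 1"
      and to_empty: "\<forall>q. 1 \<le> q \<and> q \<le> n - 2 \<longrightarrow> t q = n - 1"
      using W by (auto simp: W_sf_def B_sf_def)
    have "t 0 \<in> {1..n-2}"
      using tr False by (cases "n = 0") (auto simp: transformations_def)
    moreover have "t = others_to_empty_trans n (t 0)"
    proof
      fix q
      consider "q = 0" | "1 \<le> q \<and> q \<le> n - 2" | "q = n - 1" | "q \<ge> n" by linarith
      then show "t q = others_to_empty_trans n (t 0) q"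
        by cases (use tr to_empty in \<open>auto simp: transformations_def others_to_empty_trans_def\<close>)
    qed
    ultimately show ?thesis by blast
  qed
qed

lemma finite_W_sf: "finite (W_sf n)"
  using card_init_to_empty_trans_le(1) W_sf_subset finite_subset by blast

lemma card_W_sf_le:
  assumes "2 \<le> n"
  shows "card (W_sf n) \<le> (n - 1) ^ (n - 2) + n - 2"
proof -
  let ?S = "init_to_empty_trans n" and ?G = "others_to_empty_trans n ` {1..n-2}"
  have fin: "finite (?S \<union> ?G)" using card_init_to_empty_trans_le(1) by simp
  have "card (W_sf n) \<le> card (?S \<union> ?G)" using card_mono[OF fin W_sf_subset] .
  also have "\<dots> \<le> card ?S + card ?G" by (rule card_Un_le)
  also have "\<dots> \<le> (n - 1) ^ (n - 2) + (n - 2)"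
    using card_init_to_empty_trans_le(2) card_image_le[of "{1..n-2}"] by (intro add_mono) auto
  finally show ?thesis using assms by simp
qed

theorem lemma2:
  fixes n :: nat and Al :: "'a set" and delta :: "nat \<Rightarrow> 'a \<Rightarrow> nat" and F :: "nat set"
  assumes "n \<ge> 4"
    and "minimal_dfa n Al delta F"
    and "empty_state Al delta F (n - 1)"
    and "suffix_free (lang Al delta F)"
    and "\<forall>p q. \<not> colliding n (trans_semigroup n Al delta) p q"
  shows "card (trans_semigroup n Al delta) \<le> (n - 1) ^ (n - 2) + n - 2
    \<and> subsemigroup (trans_semigroup n Al delta) (W_sf n)"
proof -
  interpret suffix_free_dfa n Al delta F
    using assms(1-4) by unfold_locales simp_all
  have sub: "trans_semigroup n Al delta \<subseteq> W_sf n"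
    using word_trans_in_W_sf[OF assms(5)] by (auto simp: trans_semigroup_def)
  then have "card (trans_semigroup n Al delta) \<le> card (W_sf n)"
    by (rule card_mono[OF finite_W_sf])
  also have "\<dots> \<le> (n - 1) ^ (n - 2) + n - 2"
    using card_W_sf_le two_le_n .
  finally show ?thesis
    using sub trans_semigroup_comp_closed[OF dfa] by (simp add: subsemigroup_def)
qed

end
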